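(* For every message $M$: $\vdash\neg\neg\mathsf{k}_{\mathsf{CM}}(M)$.
   Context: Fix a finite set $\mathcal{A}$ of agent names containing a distinguished name $\mathsf{CM}$. Messages: $M ::= a \mid B \mid (M,M)$ ($a\in\mathcal{A}$, $B$ optional data constants, pairs). $\mathcal{P}$ is a denumerable set of propositional variables containing atoms $\mathsf{k}_a(M)$ ("$a$ knows $M$"). Formulas: $\phi ::= P \mid \phi\wedge\phi \mid \phi\vee\phi \mid \neg\phi \mid \phi\to\phi \mid [M]\phi$. Abbreviations: $\mathrm{true}:=\mathsf{k}_{\mathsf{CM}}(\mathsf{CM})$, $\mathrm{false}:=\neg\mathrm{true}$, $\phi\leftrightarrow\psi:=(\phi\to\psi)\wedge(\psi\to\phi)$, $\langle M\rangle\phi:=\neg\neg(\mathsf{k}_{\mathsf{CM}}(M)\wedge\phi)$. LIiP is the smallest set of formulas containing all instances of: the axioms of an adequate Hilbert axiomatization of intuitionistic propositional logic; $\mathsf{k}_a(a)$; $(\mathsf{k}_a(M)\wedge\mathsf{k}_a(M'))\leftrightarrow\mathsf{k}_a((M,M'))$; $[M]\mathsf{k}_{\mathsf{CM}}(M)$; $[M](\phi\to\psi)\to([M]\phi\to[M]\psi)$; $[M]\phi\to(\mathsf{k}_{\mathsf{CM}}(M)\to\phi)$; $[M]\phi\to\langle M\rangle\phi$; $\phi\to[M]\phi$; and closed under modus ponens and the rule: if $\mathsf{k}_{\mathsf{CM}}(M)\to\mathsf{k}_{\mathsf{CM}}(M')$ is in the set then so is $[M']\phi\to[M]\phi$ for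 every $\phi$. Write $\vdash\phi$ for $\phi\in\mathrm{LIiP}$. *)

theory Defs
  imports Main
begin

datatype ('ag, 'd) msg = Agent 'ag | Data 'd | Pair "('ag, 'd) msg" "('ag, 'd) msg"

datatype ('ag, 'd, 'p) pvar = K 'ag "('ag, 'd) msg" | PV 'p

datatype ('ag, 'd, 'p) form =
    Var "('ag, 'd, 'p) pvar"
  | Conj "('ag, 'd, 'p) form" "('ag, 'd, 'p) form"
  | Disj "('ag, 'd, 'p) form" "('ag, 'd, 'p) form"
  | Neg "('ag, 'd, 'p) form"
  | Imp "('ag, 'd, 'p) form" "('ag, 'd, 'p) form"
  | Box "('ag, 'd) msg" "('ag, 'd, 'p) form"

abbreviation know :: "'ag \<Rightarrow> ('ag, 'd) msg \<Rightarrow> ('ag, 'd, 'p) form" where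
  "know a M \<equiv> Var (K a M)"

definition Iff :: "('ag, 'd, 'p) form \<Rightarrow> ('ag, 'd, 'p) form \<Rightarrow> ('ag, 'd, 'p) form" where
  "Iff \<phi> \<psi> = Conj (Imp \<phi> \<psi>) (Imp \<psi> \<phi>)"

definition Dia :: "'ag \<Rightarrow> ('ag, 'd) msg \<Rightarrow> ('ag, 'd, 'p) form \<Rightarrow> ('ag, 'd, 'p) form" where
  "Dia CM M \<phi> = Neg (Neg (Conj (know CM M) \<phi>))"

text \<open>LIiP, for distinguished agent CM. The intuitionistic propositional part uses
  Kleene's Hilbert-style axiomatization (with modus ponens).\<close>
inductive_set LIiP :: "'ag \<Rightarrow> ('ag, 'd, 'p) form set" for CM :: 'ag where
  ax1: "Imp \<phi> (Imp \<psi> \<phi>) \<in> LIiP CM"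
| ax2: "Imp (Imp \<phi> \<psi>) (Imp (Imp \<phi> (Imp \<psi> \<chi>)) (Imp \<phi> \<chi>)) \<in> LIiP CM"
| ax3: "Imp \<phi> (Imp \<psi> (Conj \<phi> \<psi>)) \<in> LIiP CM"
| ax4: "Imp (Conj \<phi> \<psi>) \<phi> \<in> LIiP CM"
| ax5: "Imp (Conj \<phi> \<psi>) \<psi> \<in> LIiP CM"
| ax6: "Imp \<phi> (Disj \<phi> \<psi>) \<in> LIiP CM"
| ax7: "Imp \<psi> (Disj \<phi> \<psi>) \<in> LIiP CM"
| ax8: "Imp (Imp \<phi> \<chi>) (Imp (Imp \<psi> \<chi>) (Imp (Disj \<phi> \<psi>) \<chi>)) \<in> LIiP CM"
| ax9: "Imp (Imp \<phi> \<psi>) (Imp (Imp \<phi> (Neg \<psi>)) (Neg \<phi>)) \<in> LIiP CM"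
| ax10: "Imp (Neg \<phi>) (Imp \<phi> \<psi>) \<in> LIiP CM"
| k_self: "know a (Agent a) \<in> LIiP CM"
| k_pair: "Iff (Conj (know a M) (know a M')) (know a (Pair M M')) \<in> LIiP CM"
| box_k: "Box M (know CM M) \<in> LIiP CM"
| box_K: "Imp (Box M (Imp \<phi> \<psi>)) (Imp (Box M \<phi>) (Box M \<psi>)) \<in> LIiP CM"
| box_T: "Imp (Box M \<phi>) (Imp (know CM M) \<phi>) \<in> LIiP CM"
| box_dia: "Imp (Box M \<phi>) (Dia CM M \<phi>) \<in> LIiP CM"
| box_pers: "Imp \<phi> (Box M \<phi>) \<in> LIiP CM"
| mp: "Imp \<phi> \<psi> \<in> LIiP CM \<Longrightarrow> \<phi> \<in> LIiP CM \<Longrightarrow> \<psi> \<in> LIiP CM"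
| mono: "Imp (know CM M) (know CM M') \<in> LIiP CM \<Longrightarrow> Imp (Box M' \<phi>) (Box M \<phi>) \<in> LIiP CM"

end

theory Submission
  imports Defs
begin

text \<open>By box_k and box_dia, CM's knowledge of M is possible: \<not>\<not>(k_CM(M) \<and> k_CM(M)).
  Double negation is monotone intuitionistically (contraposition twice), so the conjunction
  elimination k_CM(M) \<and> k_CM(M) \<rightarrow> k_CM(M) yields \<not>\<not>k_CM(M).\<close>

lemma LIiP_imp_const: "\<phi> \<in> LIiP CM \<Longrightarrow> Imp \<psi> \<phi> \<in> LIiP CM"
  by (rule LIiP.mp[OF LIiP.ax1])

lemma LIiP_imp_S:
  "Imp \<phi> \<psi> \<in> LIiP CM \<Longrightarrow> Imp \<phi> (Imp \<psi> \<chi>) \<in> LIiP CM \<Longrightarrow> Imp \<phi> \<chi> \<in> LIiP CM"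
  by (rule LIiP.mp[OF LIiP.mp[OF LIiP.ax2]])

lemma LIiP_contrapos:
  assumes "Imp \<phi> \<psi> \<in> LIiP CM"
  shows "Imp (Neg \<psi>) (Neg \<phi>) \<in> LIiP CM"
proof -
  have "Imp (Neg \<psi>) (Imp \<phi> \<psi>) \<in> LIiP CM"
    using assms by (rule LIiP_imp_const)
  moreover have "Imp (Neg \<psi>) (Imp (Imp \<phi> \<psi>) (Imp (Imp \<phi> (Neg \<psi>)) (Neg \<phi>))) \<in> LIiP CM"
    by (rule LIiP_imp_const[OF LIiP.ax9])
  ultimately have "Imp (Neg \<psi>) (Imp (Imp \<phi> (Neg \<psi>)) (Neg \<phi>)) \<in> LIiP CM"
    by (rule LIiP_imp_S)
  then show ?thesis
    by (rule LIiP_imp_S[OF LIiP.ax1])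
qed

lemma LIiP_double_neg_mono:
  "Imp \<phi> \<psi> \<in> LIiP CM \<Longrightarrow> Imp (Neg (Neg \<phi>)) (Neg (Neg \<psi>)) \<in> LIiP CM"
  by (intro LIiP_contrapos)

lemma LIiP_dia_imp_not_not: "Dia CM M \<phi> \<in> LIiP CM \<Longrightarrow> Neg (Neg \<phi>) \<in> LIiP CM"
  unfolding Dia_def by (rule LIiP.mp[OF LIiP_double_neg_mono[OF LIiP.ax5]])

theorem theorem2p11:
  fixes CM :: "'ag::finite" and M :: "('ag, 'd) msg"
  shows "(Neg (Neg (know CM M)) :: ('ag, 'd, 'p) form) \<in> LIiP CM"
proof -
  have "(Dia CM M (know CM M) :: ('ag, 'd, 'p) form) \<in> LIiP CM"
    by (rule LIiP.mp[OF LIiP.box_dia LIiP.box_k])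
  then show ?thesis
    by (rule LIiP_dia_imp_not_not)
qed

end
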